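(* Assume job sizes are exponentially distributed with mean 1. Fix a server $s\in\mathcal{S}$, multipliers $\nu_j\in\mathbb{R}$ ($j\in\mathcal{J}_s$) and $\eta_{j,s}\in\mathbb{R}$. Let $g^*$ be the maximal long-run average reward of the single-server problem (SP$_s$) below. Then there exists a policy $\phi^*$ maximizing (SP$_s$) such that for every $j\in\mathcal{J}_s$ and every $n\in\mathcal{C}_{k(s)}$, $$\alpha^{\phi^*}_{j,s}(n)=\begin{cases}1,&\text{if }\frac{\nu_j}{\lambda_j}<V^{g^*}_s(n+1)-V^{g^*}_s(n),\\ 1\text{ or }0,&\text{if }\frac{\nu_j}{\lambda_j}=V^{g^*}_s(n+1)-V^{g^*}_s(n),\\ 0,&\text{otherwise.}\end{cases}$$
   Context: Setting: job types $j\in\mathcal{J}$ with Poisson arrival rates $\lambda_j>0$; server $s$ belongs to group $k=k(s)$, serves by processor sharing at total rate $\mu_k>0$ when nonempty, holds at most $B_k\ge1$ jobs, and consumes power $\varepsilon_k$ when nonempty and $\varepsilon^0_k$ when empty ($\varepsilon_k>\varepsilon^0_k\ge0$); $\mathcal{J}_s$ is the set of job types server $s$ may serve. $\mathcal{B}_k=\{0,\dots,B_k\}$, $\mathcal{C}_k=\{0,\dots,B_k-1\}$. $e^*\in\mathbb{R}$ is a fixed constant (the optimal energy efficiency of the farm), $f^r_k(n)=f^\mu_k(n)-e^*f^\varepsilon_k(n)$ with $f^\mu_k(0)=0$, $f^\varepsilon_k(0)=\varepsilon^0_k$, $f^\mu_k(n)=\mu_k$, $f^\varepsilon_k(n)=\varepsilon_k$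 for $n>0$. Single-server problem (SP$_s$): a stationary policy chooses $\alpha_{j,s}(n)\in[0,1]$ for $j\in\mathcal{J}_s$, $n\in\mathcal{B}_k$; the server state is then a birth–death chain on $\mathcal{B}_k$ with upward rate $\sum_{j\in\mathcal{J}_s}\lambda_j\alpha_{j,s}(n)$ and downward rate $\mu_k$ in states $n\ge1$. With steady-state distribution $\pi_s$, (SP$_s$) maximizes $\sum_{n\in\mathcal{B}_k}\pi_s(n)\bigl(f^r_k(n)-\sum_{j\in\mathcal{J}_s}\nu_j\alpha_{j,s}(n)-\mathbf{1}\{n=B_k\}\sum_{j\in\mathcal{J}_s}\eta_{j,s}\alpha_{j,s}(B_k)\bigr)$. For $g\in\mathbb{R}$, define the reward rate in state $n$ under actions $\alpha$ as $\tilde f^g(n)=f^r_k(n)-g-\sum_{j\in\mathcal{J}_s}\nu_j\alpha_{j,s}(n)$ for $n\in\mathcal{C}_k$ and $f^r_k(n)-g-\sum_{j\in\mathcal{J}_s}(\nu_j+\eta_{j,s})\alpha_{j,s}(n)$ for $n=B_k$; $V^g_s(n)$ is the maximum, over stationary policies with $\sum_{j\in\mathcal{J}_s}\alpha_{j,s}(0)>0$, of the expected cumulative $\tilde f^g$-reward accumulated starting from state $n$ until the chain first enters state $0$, with $V^g_s(0)=0$. *)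

theory Defs
  imports "HOL-Analysis.Analysis"
begin

text \<open>Single-server problem (SP_s) for a server with admissible job-type set Js,
  arrival rates lam, capacity Bk, service rate mu, power eps (busy) / eps0 (idle),
  and fixed constant estar.  A stationary policy is alpha :: 'j => nat => real,
  alpha j n being the admission probability of a type-j job in state n.\<close>

definition fr :: "real \<Rightarrow> real \<Rightarrow> real \<Rightarrow> real \<Rightarrow> nat \<Rightarrow> real" where
  "fr mu eps eps0 estar n =
     (if n = 0 then 0 else mu) - estar * (if n = 0 then eps0 else eps)"

definition admissible :: "'j set \<Rightarrow> nat \<Rightarrow> ('j \<Rightarrow> nat \<Rightarrow> real) \<Rightarrow> bool" where
  "admissible Js Bk alpha \<longleftrightarrow> (\<forall>j\<in>Js. \<forall>n\<le>Bk. 0 \<le> alpha j n \<and> alpha j n \<le> 1)"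

definition up :: "'j set \<Rightarrow> ('j \<Rightarrow> real) \<Rightarrow> nat \<Rightarrow> ('j \<Rightarrow> nat \<Rightarrow> real) \<Rightarrow> nat \<Rightarrow> real" where
  "up Js lam Bk alpha n = (if n < Bk then (\<Sum>j\<in>Js. lam j * alpha j n) else 0)"

definition gen :: "'j set \<Rightarrow> ('j \<Rightarrow> real) \<Rightarrow> nat \<Rightarrow> real \<Rightarrow> ('j \<Rightarrow> nat \<Rightarrow> real)
                    \<Rightarrow> nat \<Rightarrow> nat \<Rightarrow> real" where
  "gen Js lam Bk mu alpha n m =
     (if m = Suc n then up Js lam Bk alpha n
      else if 0 < n \<and> m = n - 1 then mu
      else if m = n then - (up Js lam Bk alpha n + (if 0 < n then mu else 0))
      else 0)"

definition stationary :: "'j set \<Rightarrow> ('j \<Rightarrow> real) \<Rightarrow> nat \<Rightarrow> real \<Rightarrow> ('j \<Rightarrow> nat \<Rightarrow> real)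
                          \<Rightarrow> (nat \<Rightarrow> real) \<Rightarrow> bool" where
  "stationary Js lam Bk mu alpha p \<longleftrightarrow>
     (\<forall>n. Bk < n \<longrightarrow> p n = 0) \<and> (\<forall>n\<le>Bk. 0 \<le> p n) \<and> (\<Sum>n\<le>Bk. p n) = 1 \<and>
     (\<forall>m\<le>Bk. (\<Sum>n\<le>Bk. p n * gen Js lam Bk mu alpha n m) = 0)"

definition steady :: "'j set \<Rightarrow> ('j \<Rightarrow> real) \<Rightarrow> nat \<Rightarrow> real \<Rightarrow> ('j \<Rightarrow> nat \<Rightarrow> real) \<Rightarrow> nat \<Rightarrow> real" where
  "steady Js lam Bk mu alpha = (THE p. stationary Js lam Bk mu alpha p)"

text \<open>Per-state reward of (SP_s) under actions alpha (Lagrangian terms included).\<close>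
definition sp_reward :: "'j set \<Rightarrow> nat \<Rightarrow> real \<Rightarrow> real \<Rightarrow> real \<Rightarrow> real \<Rightarrow> ('j \<Rightarrow> real)
                         \<Rightarrow> ('j \<Rightarrow> real) \<Rightarrow> ('j \<Rightarrow> nat \<Rightarrow> real) \<Rightarrow> nat \<Rightarrow> real" where
  "sp_reward Js Bk mu eps eps0 estar nu eta alpha n =
     fr mu eps eps0 estar n - (\<Sum>j\<in>Js. nu j * alpha j n)
     - (if n = Bk then (\<Sum>j\<in>Js. eta j * alpha j Bk) else 0)"

definition avg_reward :: "'j set \<Rightarrow> ('j \<Rightarrow> real) \<Rightarrow> nat \<Rightarrow> real \<Rightarrow> real \<Rightarrow> real \<Rightarrow> real
                          \<Rightarrow> ('j \<Rightarrow> real) \<Rightarrow> ('j \<Rightarrow> real) \<Rightarrow> ('j \<Rightarrow> nat \<Rightarrow> real) \<Rightarrow> real" where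
  "avg_reward Js lam Bk mu eps eps0 estar nu eta alpha =
     (\<Sum>n\<le>Bk. steady Js lam Bk mu alpha n * sp_reward Js Bk mu eps eps0 estar nu eta alpha n)"

definition gstar :: "'j set \<Rightarrow> ('j \<Rightarrow> real) \<Rightarrow> nat \<Rightarrow> real \<Rightarrow> real \<Rightarrow> real \<Rightarrow> real
                     \<Rightarrow> ('j \<Rightarrow> real) \<Rightarrow> ('j \<Rightarrow> real) \<Rightarrow> real" where
  "gstar Js lam Bk mu eps eps0 estar nu eta =
     (SUP alpha \<in> {alpha. admissible Js Bk alpha}. avg_reward Js lam Bk mu eps eps0 estar nu eta alpha)"

definition ftil :: "'j set \<Rightarrow> nat \<Rightarrow> real \<Rightarrow> real \<Rightarrow> real \<Rightarrow> real \<Rightarrow> ('j \<Rightarrow> real)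
                    \<Rightarrow> ('j \<Rightarrow> real) \<Rightarrow> real \<Rightarrow> ('j \<Rightarrow> nat \<Rightarrow> real) \<Rightarrow> nat \<Rightarrow> real" where
  "ftil Js Bk mu eps eps0 estar nu eta g alpha n =
     (if n < Bk then fr mu eps eps0 estar n - g - (\<Sum>j\<in>Js. nu j * alpha j n)
      else fr mu eps eps0 estar n - g - (\<Sum>j\<in>Js. (nu j + eta j) * alpha j n))"

definition outrate :: "'j set \<Rightarrow> ('j \<Rightarrow> real) \<Rightarrow> nat \<Rightarrow> real \<Rightarrow> ('j \<Rightarrow> nat \<Rightarrow> real) \<Rightarrow> nat \<Rightarrow> real" where
  "outrate Js lam Bk mu alpha n = up Js lam Bk alpha n + mu"

definition jump :: "'j set \<Rightarrow> ('j \<Rightarrow> real) \<Rightarrow> nat \<Rightarrow> real \<Rightarrow> ('j \<Rightarrow> nat \<Rightarrow> real)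
                    \<Rightarrow> nat \<Rightarrow> nat \<Rightarrow> real" where
  "jump Js lam Bk mu alpha l m =
     (if m = Suc l then up Js lam Bk alpha l / outrate Js lam Bk mu alpha l
      else if Suc m = l then mu / outrate Js lam Bk mu alpha l
      else 0)"

text \<open>taboo t n m: probability that the embedded jump chain started in n is in state m
  after t jumps without having visited state 0 (states m in 1..Bk).\<close>
fun taboo :: "'j set \<Rightarrow> ('j \<Rightarrow> real) \<Rightarrow> nat \<Rightarrow> real \<Rightarrow> ('j \<Rightarrow> nat \<Rightarrow> real)
              \<Rightarrow> nat \<Rightarrow> nat \<Rightarrow> nat \<Rightarrow> real" where
  "taboo Js lam Bk mu alpha 0 n m = (if m = n then 1 else 0)"
| "taboo Js lam Bk mu alpha (Suc t) n m =
     (\<Sum>l\<in>{1..Bk}. taboo Js lam Bk mu alpha t n l * jump Js lam Bk mu alpha l m)"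

text \<open>Expected cumulative tilde f^g reward from state n until first entrance into 0:
  in each visit to state m the chain stays an exponential time of mean 1/outrate m.\<close>
definition cum_reward :: "'j set \<Rightarrow> ('j \<Rightarrow> real) \<Rightarrow> nat \<Rightarrow> real \<Rightarrow> real \<Rightarrow> real \<Rightarrow> real
                          \<Rightarrow> ('j \<Rightarrow> real) \<Rightarrow> ('j \<Rightarrow> real) \<Rightarrow> real \<Rightarrow> ('j \<Rightarrow> nat \<Rightarrow> real) \<Rightarrow> nat \<Rightarrow> real" where
  "cum_reward Js lam Bk mu eps eps0 estar nu eta g alpha n =
     (\<Sum>t. \<Sum>m\<in>{1..Bk}. taboo Js lam Bk mu alpha t n m
            * ftil Js Bk mu eps eps0 estar nu eta g alpha m / outrate Js lam Bk mu alpha m)"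

definition Vfun :: "'j set \<Rightarrow> ('j \<Rightarrow> real) \<Rightarrow> nat \<Rightarrow> real \<Rightarrow> real \<Rightarrow> real \<Rightarrow> real
                    \<Rightarrow> ('j \<Rightarrow> real) \<Rightarrow> ('j \<Rightarrow> real) \<Rightarrow> real \<Rightarrow> nat \<Rightarrow> real" where
  "Vfun Js lam Bk mu eps eps0 estar nu eta g n =
     (if n = 0 then 0
      else (SUP alpha \<in> {alpha. admissible Js Bk alpha \<and> 0 < (\<Sum>j\<in>Js. alpha j 0)}.
              cum_reward Js lam Bk mu eps eps0 estar nu eta g alpha n))"

end

theory Submission
  imports Defs
begin

(* Write d_g(n) = V^g(n) - V^g(n-1). Since no arrival is possible in the full state K, these
   increments obey a backward Bellman recursion starting at K,
     mu d_g(n) = f^r(n) - g + sum_j max(0, lambda_j d_g(n+1) - nu_j)   (n < K),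
   and the threshold policy admits type j in state n < K iff nu_j < lambda_j d_g(n+1).
   For the relative values h_g(n) = d_g(1) + ... + d_g(n), stationarity of the birth-death chain
   gives, for every policy, avg - g <= pi(0) mu d_g(0), with equality for the threshold policy.
   As pi(0) is bounded below uniformly over all policies, d_g(0) = 0 at g = g*, so the threshold
   policy is optimal. Finally the first-passage equation of a fixed policy is solved by the same
   backward recursion, which identifies V^g with h_g. *)

lemma mult_le_max_0: "0 \<le> x \<Longrightarrow> x \<le> 1 \<Longrightarrow> x * y \<le> max 0 (y :: real)"
  by (cases "0 \<le> y") (auto simp: mult_left_le_one_le mult_nonneg_nonpos)

locale single_server =
  fixes Js :: "'j set" and lam :: "'j \<Rightarrow> real" and K :: nat
    and mu eps eps0 estar :: real and nu eta :: "'j \<Rightarrow> real"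
  assumes finite_Js: "finite Js" and lam_pos: "\<And>j. j \<in> Js \<Longrightarrow> 0 < lam j"
    and mu_pos: "0 < mu" and K_pos: "0 < K"
begin

abbreviation "adm a \<equiv> admissible Js K a"
abbreviation "birth a n \<equiv> up Js lam K a n"
abbreviation "rate a n \<equiv> outrate Js lam K mu a n"
abbreviation "P a \<equiv> jump Js lam K mu a"
abbreviation "T a \<equiv> taboo Js lam K mu a"
abbreviation "Q a \<equiv> gen Js lam K mu a"
abbreviation "stat a p \<equiv> stationary Js lam K mu a p"
abbreviation "reward a n \<equiv> sp_reward Js K mu eps eps0 estar nu eta a n"
abbreviation "ft g a n \<equiv> ftil Js K mu eps eps0 estar nu eta g a n"
abbreviation "avg a \<equiv> avg_reward Js lam K mu eps eps0 estar nu eta a"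
abbreviation "g_opt \<equiv> gstar Js lam K mu eps eps0 estar nu eta"
abbreviation "V g \<equiv> Vfun Js lam K mu eps eps0 estar nu eta g"

lemma admD: "adm a \<Longrightarrow> j \<in> Js \<Longrightarrow> n \<le> K \<Longrightarrow> 0 \<le> a j n \<and> a j n \<le> 1"
  unfolding admissible_def by blast

lemma birth_nonneg: "adm a \<Longrightarrow> 0 \<le> birth a n"
  unfolding up_def admissible_def by (auto intro!: sum_nonneg simp: less_imp_le lam_pos)

lemma birth_top: "K \<le> n \<Longrightarrow> birth a n = 0"
  unfolding up_def by simp

lemma birth_le_total:
  assumes "adm a" shows "birth a n \<le> (\<Sum>j\<in>Js. lam j)"
proof -
  have "lam j * a j n \<le> lam j" if "j \<in> Js" "n < K" for j
    using admD[OF assms that(1), of n] lam_pos[OF that(1)] that(2) by (simp add: mult_left_le)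
  then show ?thesis
    unfolding up_def by (auto intro!: sum_mono sum_nonneg less_imp_le[OF lam_pos])
qed

lemma rate_pos: "adm a \<Longrightarrow> 0 < rate a n"
  unfolding outrate_def using birth_nonneg[of a n] mu_pos by simp

lemma gen_eq: "Q a n m = (if m = Suc n then birth a n else 0) + (if 0 < n \<and> m = n - 1 then mu else 0)
   - (if m = n then birth a n + (if 0 < n then mu else 0) else 0)"
  unfolding gen_def by auto

lemma gen_row_sum:
  assumes "n \<le> K"
  shows "(\<Sum>m\<le>K. Q a n m * h m) =
    birth a n * (h (Suc n) - h n) + (if 0 < n then mu * (h (n - 1) - h n) else 0)"
proof -
  have "(\<Sum>m\<le>K. Q a n m * h m) = (\<Sum>m\<le>K. if m = Suc n then birth a n * h m else 0)
     + (\<Sum>m\<le>K. if m = n - 1 then (if 0 < n then mu * h m else 0) else 0)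
     - (\<Sum>m\<le>K. if m = n then (birth a n + (if 0 < n then mu else 0)) * h m else 0)"
    unfolding gen_eq sum.distrib[symmetric] sum_subtractf[symmetric]
    by (rule sum.cong) (auto simp: algebra_simps)
  also have "\<dots> = birth a n * h (Suc n) + (if 0 < n then mu * h (n - 1) else 0)
     - (birth a n + (if 0 < n then mu else 0)) * h n"
    using assms birth_top[of n a] by (cases "n < K") auto
  also have "\<dots> = birth a n * (h (Suc n) - h n) + (if 0 < n then mu * (h (n - 1) - h n) else 0)"
    by (simp add: algebra_simps)
  finally show ?thesis .
qed

lemma gen_col_sum:
  assumes "m \<le> K"
  shows "(\<Sum>n\<le>K. p n * Q a n m) = (if 0 < m then p (m - 1) * birth a (m - 1) else 0)
     + (if m < K then p (Suc m) * mu else 0) - p m * (birth a m + (if 0 < m then mu else 0))"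
proof -
  have "(\<Sum>n\<le>K. p n * Q a n m) =
       (\<Sum>n\<le>K. if n = m - 1 then (if 0 < m then p n * birth a n else 0) else 0)
     + (\<Sum>n\<le>K. if n = Suc m then p n * mu else 0)
     - (\<Sum>n\<le>K. if n = m then p n * (birth a m + (if 0 < m then mu else 0)) else 0)"
    unfolding gen_eq sum.distrib[symmetric] sum_subtractf[symmetric]
    by (rule sum.cong) (auto simp: algebra_simps)
  also have "\<dots> = (if 0 < m then p (m - 1) * birth a (m - 1) else 0)
     + (if m < K then p (Suc m) * mu else 0) - p m * (birth a m + (if 0 < m then mu else 0))"
    using assms by (auto simp: sum.delta)
  finally show ?thesis .
qed

lemma stationary_detailed_balance:
  assumes "stat a p" and "n < K"
  shows "p n * birth a n = p (Suc n) * mu"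
  using assms(2)
proof (induction n)
  case 0
  have "(\<Sum>n\<le>K. p n * Q a n 0) = 0" using assms(1) unfolding stationary_def by auto
  then show ?case using gen_col_sum[of 0 p a] 0 by simp
next
  case (Suc n)
  have "(\<Sum>k\<le>K. p k * Q a k (Suc n)) = 0" using assms(1) Suc.prems unfolding stationary_def by auto
  then show ?case using gen_col_sum[of "Suc n" p a] Suc by (simp add: algebra_simps)
qed

lemma stationary_drift_zero:
  assumes "stat a p"
  shows "(\<Sum>n\<le>K. p n * (\<Sum>m\<le>K. Q a n m * h m)) = 0"
proof -
  have "(\<Sum>n\<le>K. p n * (\<Sum>m\<le>K. Q a n m * h m)) = (\<Sum>m\<le>K. h m * (\<Sum>n\<le>K. p n * Q a n m))"
    unfolding sum_distrib_left sum_distrib_right by (subst sum.swap) (simp add: algebra_simps)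
  also have "\<dots> = 0" using assms unfolding stationary_def by simp
  finally show ?thesis .
qed

fun bd_weight :: "('j \<Rightarrow> nat \<Rightarrow> real) \<Rightarrow> nat \<Rightarrow> real" where
  "bd_weight a 0 = 1"
| "bd_weight a (Suc n) = bd_weight a n * birth a n / mu"

definition stat_dist :: "('j \<Rightarrow> nat \<Rightarrow> real) \<Rightarrow> nat \<Rightarrow> real" where
  "stat_dist a n = (if n \<le> K then bd_weight a n / (\<Sum>m\<le>K. bd_weight a m) else 0)"

lemma bd_weight_nonneg: "adm a \<Longrightarrow> 0 \<le> bd_weight a n"
  by (induction n) (auto intro!: divide_nonneg_pos mult_nonneg_nonneg birth_nonneg mu_pos)

lemma bd_weight_sum_ge_1: "adm a \<Longrightarrow> 1 \<le> (\<Sum>n\<le>K. bd_weight a n)"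
  using member_le_sum[of 0 "{..K}" "bd_weight a"] bd_weight_nonneg[of a] by simp

lemma bd_weight_le: "adm a \<Longrightarrow> bd_weight a n \<le> ((\<Sum>j\<in>Js. lam j) / mu) ^ n"
proof (induction n)
  case (Suc n)
  then show ?case
    using bd_weight_nonneg[of a n] birth_nonneg[of a n] birth_le_total[of a n] mu_pos
    by (auto simp: mult.commute intro!: mult_mono divide_right_mono)
qed simp

lemma stationary_stat_dist:
  assumes "adm a" shows "stat a (stat_dist a)"
proof -
  let ?W = "\<Sum>m\<le>K. bd_weight a m"
  have W: "1 \<le> ?W" using bd_weight_sum_ge_1[OF assms] .
  have balance: "stat_dist a n * birth a n = stat_dist a (Suc n) * mu" if "n < K" for n
    using that mu_pos W by (simp add: stat_dist_def field_simps)
  have "(\<Sum>n\<le>K. stat_dist a n) = (\<Sum>n\<le>K. bd_weight a n) / ?W"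
    unfolding stat_dist_def sum_divide_distrib by simp
  then have total: "(\<Sum>n\<le>K. stat_dist a n) = 1" using W by simp
  have flow: "(\<Sum>n\<le>K. stat_dist a n * Q a n m) = 0" if m: "m \<le> K" for m
  proof -
    have "(if 0 < m then stat_dist a (m - 1) * birth a (m - 1) else 0) = (if 0 < m then stat_dist a m * mu else 0)"
      using balance[of "m - 1"] m by auto
    moreover have "(if m < K then stat_dist a (Suc m) * mu else 0) = stat_dist a m * birth a m"
      using balance[of m] birth_top[of m a] m by auto
    ultimately show ?thesis unfolding gen_col_sum[OF m] by (simp add: algebra_simps)
  qed
  show ?thesis
    unfolding stationary_def using total flow W
    by (auto simp: stat_dist_def intro!: divide_nonneg_pos bd_weight_nonneg[OF assms])
qed

lemma stationary_unique:
  assumes "adm a" and "stat a p"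
  shows "p = stat_dist a"
proof
  fix n
  have p_weight: "p n = p 0 * bd_weight a n" if "n \<le> K" for n
    using that
  proof (induction n)
    case (Suc n)
    then have "p (Suc n) * mu = p n * birth a n"
      using stationary_detailed_balance[OF assms(2), of n] by simp
    then show ?case using Suc mu_pos by (simp add: field_simps)
  qed simp
  let ?W = "\<Sum>m\<le>K. bd_weight a m"
  have "1 = (\<Sum>n\<le>K. p n)" using assms(2) unfolding stationary_def by simp
  also have "\<dots> = (\<Sum>n\<le>K. p 0 * bd_weight a n)" by (intro sum.cong refl p_weight) simp
  also have "\<dots> = p 0 * ?W" by (simp add: sum_distrib_left)
  finally have "p 0 = 1 / ?W" using bd_weight_sum_ge_1[OF assms(1)] by (simp add: field_simps)
  then show "p n = stat_dist a n"
    using p_weight[of n] assms(2) unfolding stationary_def stat_dist_def by (cases "n \<le> K") simp_all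
qed

lemma steady_eq_stat_dist: "adm a \<Longrightarrow> steady Js lam K mu a = stat_dist a"
  unfolding steady_def by (auto intro: stationary_stat_dist stationary_unique)

lemma stat_dist_nonneg: "adm a \<Longrightarrow> 0 \<le> stat_dist a n"
  using stationary_stat_dist unfolding stationary_def by (cases "n \<le> K") auto

lemma stat_dist_0_bounds: "\<exists>c>0. \<forall>a. adm a \<longrightarrow> c \<le> stat_dist a 0 \<and> stat_dist a 0 \<le> 1"
proof -
  define C where "C = (\<Sum>n\<le>K. ((\<Sum>j\<in>Js. lam j) / mu) ^ n)"
  have bounds: "1 \<le> (\<Sum>n\<le>K. bd_weight a n) \<and> (\<Sum>n\<le>K. bd_weight a n) \<le> C" if "adm a" for a
    unfolding C_def using bd_weight_sum_ge_1[OF that] bd_weight_le[OF that] by (simp add: sum_mono)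
  have "1 / C \<le> stat_dist a 0 \<and> stat_dist a 0 \<le> 1" if "adm a" for a
    using bounds[OF that] by (simp add: stat_dist_def frac_le)
  moreover have "0 < 1 / C"
    using bounds[of "\<lambda>_ _. 0"] by (simp add: admissible_def)
  ultimately show ?thesis by blast
qed

lemma jump_nonneg: "adm a \<Longrightarrow> 0 \<le> P a l m"
  unfolding jump_def using birth_nonneg[of a l] rate_pos[of a l] mu_pos by auto

lemma taboo_nonneg: "adm a \<Longrightarrow> 0 \<le> T a t n m"
  by (induction t arbitrary: m) (auto intro!: sum_nonneg mult_nonneg_nonneg jump_nonneg)

lemma jump_sum:
  assumes "1 \<le> n" "n \<le> K" "X 0 = 0"
  shows "(\<Sum>l\<in>{1..K}. P a n l * X l) = (birth a n * X (Suc n) + mu * X (n - 1)) / rate a n"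
proof -
  have "(\<Sum>l\<in>{1..K}. P a n l * X l) = (\<Sum>l\<in>{1..K}. if l = Suc n then birth a n / rate a n * X l else 0)
     + (\<Sum>l\<in>{1..K}. if l = n - 1 then mu / rate a n * X l else 0)"
    unfolding sum.distrib[symmetric] by (rule sum.cong) (use assms in \<open>auto simp: jump_def\<close>)
  also have "\<dots> = birth a n / rate a n * X (Suc n) + mu / rate a n * X (n - 1)"
    using assms birth_top[of n a] by (cases "n < K"; cases "n = 1") auto
  finally show ?thesis by (simp add: add_divide_distrib)
qed

text \<open>\<open>first_passage c a n\<close> is the expected reward collected before the chain started in \<open>n\<close>
  first enters 0, when each visit to \<open>m\<close> earns \<open>c m\<close>; its increments \<open>fp_diff\<close> obey a
  backward recursion from the full state \<open>K\<close>.\<close>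

function fp_diff :: "(nat \<Rightarrow> real) \<Rightarrow> ('j \<Rightarrow> nat \<Rightarrow> real) \<Rightarrow> nat \<Rightarrow> real" where
  "fp_diff c a n = (c n * rate a n + (if n < K then birth a n * fp_diff c a (Suc n) else 0)) / mu"
  by auto
termination by (relation "Wellfounded.measure (\<lambda>(c, a, n). K - n)") auto

declare fp_diff.simps [simp del]

lemma fp_diff_rec: "n \<le> K \<Longrightarrow> mu * fp_diff c a n = c n * rate a n + birth a n * fp_diff c a (Suc n)"
  using mu_pos birth_top[of n a] by (subst fp_diff.simps) auto

definition first_passage :: "(nat \<Rightarrow> real) \<Rightarrow> ('j \<Rightarrow> nat \<Rightarrow> real) \<Rightarrow> nat \<Rightarrow> real" where
  "first_passage c a n = (\<Sum>i = 1..n. fp_diff c a i)"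

lemma first_passage_0 [simp]: "first_passage c a 0 = 0"
  unfolding first_passage_def by simp

lemma first_passage_Suc: "first_passage c a (Suc n) = first_passage c a n + fp_diff c a (Suc n)"
  unfolding first_passage_def by simp

lemma first_passage_eq:
  assumes "adm a" and n: "n \<in> {1..K}"
  shows "first_passage c a n = c n + (\<Sum>l\<in>{1..K}. P a n l * first_passage c a l)"
proof -
  let ?X = "first_passage c a" and ?d = "fp_diff c a"
  have up: "?X (Suc n) = ?X n + ?d (Suc n)" by (rule first_passage_Suc)
  have down: "?X (n - 1) = ?X n - ?d n" using n first_passage_Suc[of c a "n - 1"] by simp
  have rate: "rate a n = birth a n + mu" unfolding outrate_def ..
  have "(\<Sum>l\<in>{1..K}. P a n l * ?X l) = (birth a n * ?X (Suc n) + mu * ?X (n - 1)) / rate a n"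
    using n by (intro jump_sum) auto
  also have "\<dots> = (rate a n * ?X n + birth a n * ?d (Suc n) - mu * ?d n) / rate a n"
    unfolding up down rate by (simp add: algebra_simps)
  also have "\<dots> = ?X n - c n"
    using fp_diff_rec[of n c a] n rate_pos[OF assms(1), of n] by (simp add: field_simps)
  finally show ?thesis by simp
qed

lemma taboo_telescope:
  assumes n: "n \<in> {1..K}"
    and X: "\<And>m. m \<in> {1..K} \<Longrightarrow> X m = c m + (\<Sum>l\<in>{1..K}. P a m l * X l)"
  shows "(\<Sum>t<N. \<Sum>m\<in>{1..K}. T a t n m * c m) = X n - (\<Sum>m\<in>{1..K}. T a N n m * X m)"
proof (induction N)
  case 0
  have "(\<Sum>m\<in>{1..K}. T a 0 n m * X m) = (\<Sum>m\<in>{1..K}. if m = n then X m else 0)"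
    by (rule sum.cong) auto
  then show ?case using n by simp
next
  case (Suc N)
  have "(\<Sum>m\<in>{1..K}. T a (Suc N) n m * X m)
      = (\<Sum>l\<in>{1..K}. T a N n l * (\<Sum>m\<in>{1..K}. P a l m * X m))"
    by (simp add: sum_distrib_left sum_distrib_right mult.assoc) (rule sum.swap)
  also have "\<dots> = (\<Sum>l\<in>{1..K}. T a N n l * (X l - c l))"
    by (rule sum.cong) (use X in auto)
  also have "\<dots> = (\<Sum>l\<in>{1..K}. T a N n l * X l) - (\<Sum>l\<in>{1..K}. T a N n l * c l)"
    by (simp add: right_diff_distrib sum_subtractf)
  finally show ?case using Suc by simp
qed

lemma fp_diff_nonneg:
  assumes "adm a" and "\<And>m. 0 \<le> c m"
  shows "0 \<le> fp_diff c a n"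
  using assms
proof (induction c a n rule: fp_diff.induct)
  case (1 c a n)
  then show ?case
    using less_imp_le[OF rate_pos[of a n]] birth_nonneg[of a n] mu_pos
    by (subst fp_diff.simps) (auto intro!: divide_nonneg_pos add_nonneg_nonneg mult_nonneg_nonneg)
qed

lemma first_passage_nonneg: "adm a \<Longrightarrow> (\<And>m. 0 \<le> c m) \<Longrightarrow> 0 \<le> first_passage c a n"
  unfolding first_passage_def by (intro sum_nonneg fp_diff_nonneg)

lemma taboo_tendsto_0:
  assumes adm: "adm a" and n: "n \<in> {1..K}" and m: "m \<in> {1..K}"
  shows "(\<lambda>t. T a t n m) \<longlonglongrightarrow> 0"
proof -
  let ?X = "first_passage (\<lambda>_. 1) a"
  let ?S = "\<lambda>t. \<Sum>m\<in>{1..K}. T a t n m"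
  have partial: "(\<Sum>t<N. ?S t) = ?X n - (\<Sum>m\<in>{1..K}. T a N n m * ?X m)" for N
    using taboo_telescope[OF n, of ?X "\<lambda>_. 1" a N] first_passage_eq[OF adm] by simp
  have "(\<Sum>t<N. ?S t) \<le> ?X n" for N
    unfolding partial
    using taboo_nonneg[OF adm] first_passage_nonneg[OF adm, of "\<lambda>_. 1"]
    by (simp add: sum_nonneg)
  moreover have "0 \<le> ?S t" for t using taboo_nonneg[OF adm] by (simp add: sum_nonneg)
  ultimately have "summable ?S" by (intro summableI_nonneg_bounded)
  then have "?S \<longlonglongrightarrow> 0" by (rule summable_LIMSEQ_zero)
  then show ?thesis
  proof (rule tendsto_sandwich[OF _ _ tendsto_const, rotated 2])
    show "\<forall>\<^sub>F t in sequentially. 0 \<le> T a t n m" using taboo_nonneg[OF adm] by simp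
    show "\<forall>\<^sub>F t in sequentially. T a t n m \<le> ?S t"
      by (intro always_eventually allI member_le_sum) (use taboo_nonneg[OF adm] m in auto)
  qed
qed

lemma first_passage_sums:
  assumes adm: "adm a" and n: "n \<in> {1..K}"
  shows "(\<lambda>t. \<Sum>m\<in>{1..K}. T a t n m * c m) sums first_passage c a n"
proof -
  let ?X = "first_passage c a"
  have partial: "(\<Sum>t<N. \<Sum>m\<in>{1..K}. T a t n m * c m) = ?X n - (\<Sum>m\<in>{1..K}. T a N n m * ?X m)" for N
    using taboo_telescope[OF n, of ?X c a N] first_passage_eq[OF adm] by simp
  have "(\<lambda>N. \<Sum>m\<in>{1..K}. T a N n m * ?X m) \<longlonglongrightarrow> 0"
    by (intro tendsto_null_sum tendsto_mult_left_zero taboo_tendsto_0[OF adm n]) auto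
  then have "(\<lambda>N. ?X n - (\<Sum>m\<in>{1..K}. T a N n m * ?X m)) \<longlonglongrightarrow> ?X n"
    using tendsto_diff[OF tendsto_const] by fastforce
  then show ?thesis unfolding sums_def partial .
qed

lemma cum_reward_eq_first_passage:
  assumes "adm a" and "n \<in> {1..K}"
  shows "cum_reward Js lam K mu eps eps0 estar nu eta g a n = first_passage (\<lambda>m. ft g a m / rate a m) a n"
  using first_passage_sums[OF assms, of "\<lambda>m. ft g a m / rate a m"]
  unfolding cum_reward_def by (simp add: sums_iff)

text \<open>For \<open>1 \<le> n \<le> K\<close>, \<open>opt_diff g n\<close> is the optimal increment \<open>V\<^sup>g(n) - V\<^sup>g(n - 1)\<close>,
  computed by backward dynamic programming from \<open>K\<close>; \<open>mu * opt_diff g 0\<close> is the Bellman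
  residual in the empty state.\<close>

function opt_diff :: "real \<Rightarrow> nat \<Rightarrow> real" where
  "opt_diff g n = (fr mu eps eps0 estar n - g + (\<Sum>j\<in>Js. max 0
     (if n < K then lam j * opt_diff g (Suc n) - nu j else - (nu j + eta j)))) / mu"
  by auto
termination by (relation "Wellfounded.measure (\<lambda>(g, n). K - n)") auto

declare opt_diff.simps [simp del]

definition gain :: "real \<Rightarrow> 'j \<Rightarrow> nat \<Rightarrow> real" where
  "gain d j n = (if n < K then lam j * d - nu j else - (nu j + eta j))"

definition threshold :: "real \<Rightarrow> 'j \<Rightarrow> nat \<Rightarrow> real" where
  "threshold g j n = (if 0 < gain (opt_diff g (Suc n)) j n then 1 else 0)"

definition rel_value :: "real \<Rightarrow> nat \<Rightarrow> real" where
  "rel_value g n = (\<Sum>i = 1..n. opt_diff g i)"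

lemma opt_diff_eq:
  "mu * opt_diff g n = fr mu eps eps0 estar n - g + (\<Sum>j\<in>Js. max 0 (gain (opt_diff g (Suc n)) j n))"
  using mu_pos by (subst opt_diff.simps) (simp add: gain_def)

lemma rel_value_0 [simp]: "rel_value g 0 = 0"
  unfolding rel_value_def by simp

lemma rel_value_Suc: "rel_value g (Suc n) = rel_value g n + opt_diff g (Suc n)"
  unfolding rel_value_def by simp

lemma threshold_adm: "adm (threshold g)"
  unfolding admissible_def threshold_def by simp

lemma threshold_mult_gain:
  "threshold g j n * gain (opt_diff g (Suc n)) j n = max 0 (gain (opt_diff g (Suc n)) j n)"
  unfolding threshold_def by simp

lemma ftil_plus_birth:
  assumes "n \<le> K"
  shows "ft g a n + birth a n * d = fr mu eps eps0 estar n - g + (\<Sum>j\<in>Js. a j n * gain d j n)"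
proof (cases "n < K")
  case True
  then show ?thesis
    unfolding ftil_def up_def gain_def
    by (simp add: sum_distrib_left sum_distrib_right sum_subtractf algebra_simps)
next
  case False
  then have "(\<Sum>j\<in>Js. a j n * gain d j n) = - (\<Sum>j\<in>Js. (nu j + eta j) * a j n)"
    unfolding gain_def sum_negf[symmetric] by (intro sum.cong) (auto simp: algebra_simps)
  then show ?thesis
    using False assms by (simp add: ftil_def up_def)
qed

lemma opt_diff_step_ge:
  assumes adm: "adm a" and n: "n \<le> K" and d: "n < K \<Longrightarrow> d \<le> opt_diff g (Suc n)"
  shows "ft g a n + birth a n * d \<le> mu * opt_diff g n"
proof -
  have "a j n * gain d j n \<le> max 0 (gain (opt_diff g (Suc n)) j n)" if j: "j \<in> Js" for j
  proof -
    have "gain d j n \<le> gain (opt_diff g (Suc n)) j n"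
      using d lam_pos[OF j] unfolding gain_def by (simp add: mult_left_mono)
    then have "a j n * gain d j n \<le> a j n * gain (opt_diff g (Suc n)) j n"
      using admD[OF adm j n] by (simp add: mult_left_mono)
    also have "\<dots> \<le> max 0 (gain (opt_diff g (Suc n)) j n)"
      using admD[OF adm j n] by (intro mult_le_max_0) auto
    finally show ?thesis .
  qed
  then show ?thesis
    unfolding ftil_plus_birth[OF n] opt_diff_eq by (simp add: sum_mono)
qed

lemma opt_diff_step_threshold:
  assumes n: "n \<le> K" and a: "\<And>j. j \<in> Js \<Longrightarrow> a j n = threshold g j n"
  shows "ft g a n + birth a n * opt_diff g (Suc n) = mu * opt_diff g n"
  unfolding ftil_plus_birth[OF n] opt_diff_eq using a threshold_mult_gain by simp

lemma fp_diff_ftil: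
  assumes "adm a" and "n \<le> K"
  shows "mu * fp_diff (\<lambda>m. ft g a m / rate a m) a n
    = ft g a n + birth a n * fp_diff (\<lambda>m. ft g a m / rate a m) a (Suc n)"
  using fp_diff_rec[OF assms(2)] rate_pos[OF assms(1), of n] by simp

lemma fp_diff_le_opt_diff:
  assumes adm: "adm a"
  shows "n \<le> K \<Longrightarrow> fp_diff (\<lambda>m. ft g a m / rate a m) a n \<le> opt_diff g n"
proof (induction n rule: inc_induct)
  case base
  have "mu * fp_diff (\<lambda>m. ft g a m / rate a m) a K \<le> mu * opt_diff g K"
    unfolding fp_diff_ftil[OF adm order_refl] by (rule opt_diff_step_ge[OF adm order_refl]) simp
  then show ?case using mu_pos by simp
next
  case (step n)
  have "mu * fp_diff (\<lambda>m. ft g a m / rate a m) a n \<le> mu * opt_diff g n"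
    unfolding fp_diff_ftil[OF adm less_imp_le[OF step.hyps(2)]]
    using step.hyps by (intro opt_diff_step_ge[OF adm _ step.IH]) auto
  then show ?case using mu_pos by simp
qed

lemma fp_diff_threshold:
  assumes adm: "adm a" and a: "\<And>j m. j \<in> Js \<Longrightarrow> m \<in> {1..K} \<Longrightarrow> a j m = threshold g j m"
    and n: "1 \<le> n"
  shows "n \<le> K \<Longrightarrow> fp_diff (\<lambda>m. ft g a m / rate a m) a n = opt_diff g n"
proof (induction n rule: inc_induct)
  case base
  have "ft g a K + birth a K * opt_diff g (Suc K) = mu * opt_diff g K"
    using a K_pos by (intro opt_diff_step_threshold) auto
  then have "mu * fp_diff (\<lambda>m. ft g a m / rate a m) a K = mu * opt_diff g K"
    unfolding fp_diff_ftil[OF adm order_refl] using birth_top[of K a] by simp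
  then show ?case using mu_pos by simp
next
  case (step m)
  have "mu * fp_diff (\<lambda>m. ft g a m / rate a m) a m = mu * opt_diff g m"
    unfolding fp_diff_ftil[OF adm less_imp_le[OF step.hyps(2)]] step.IH
    using step.hyps n a by (intro opt_diff_step_threshold) auto
  then show ?case using mu_pos by simp
qed

lemma first_passage_le_rel_value:
  "adm a \<Longrightarrow> n \<le> K \<Longrightarrow> first_passage (\<lambda>m. ft g a m / rate a m) a n \<le> rel_value g n"
  unfolding first_passage_def rel_value_def by (intro sum_mono fp_diff_le_opt_diff) auto

lemma first_passage_threshold:
  assumes "adm a" and "\<And>j m. j \<in> Js \<Longrightarrow> m \<in> {1..K} \<Longrightarrow> a j m = threshold g j m" and "n \<le> K"
  shows "first_passage (\<lambda>m. ft g a m / rate a m) a n = rel_value g n"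
  unfolding first_passage_def rel_value_def using assms by (intro sum.cong refl fp_diff_threshold) auto

lemma bellman_slack_eq:
  assumes n: "n \<le> K"
  shows "reward a n - g + (\<Sum>m\<le>K. Q a n m * rel_value g m) =
    (\<Sum>j\<in>Js. a j n * gain (opt_diff g (Suc n)) j n) - (\<Sum>j\<in>Js. max 0 (gain (opt_diff g (Suc n)) j n))
    + (if n = 0 then mu * opt_diff g 0 else 0)"
proof -
  have "reward a n - g = ft g a n"
    using n unfolding sp_reward_def ftil_def by (auto simp: sum.distrib algebra_simps)
  moreover have "(\<Sum>m\<le>K. Q a n m * rel_value g m) =
      birth a n * opt_diff g (Suc n) - (if 0 < n then mu * opt_diff g n else 0)"
    unfolding gen_row_sum[OF n] rel_value_Suc using rel_value_Suc[of g "n - 1"] by auto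
  ultimately show ?thesis
    using ftil_plus_birth[OF n, of g a "opt_diff g (Suc n)"] opt_diff_eq[of g n] by auto
qed

lemma avg_reward_decomp:
  assumes adm: "adm a"
  shows "avg a - g = (\<Sum>n\<le>K. stat_dist a n *
      ((\<Sum>j\<in>Js. a j n * gain (opt_diff g (Suc n)) j n) - (\<Sum>j\<in>Js. max 0 (gain (opt_diff g (Suc n)) j n))))
    + stat_dist a 0 * (mu * opt_diff g 0)"
proof -
  have stat: "stat a (stat_dist a)" by (rule stationary_stat_dist[OF adm])
  then have "(\<Sum>n\<le>K. stat_dist a n) = 1" unfolding stationary_def by simp
  then have "avg a - g = (\<Sum>n\<le>K. stat_dist a n * (reward a n - g))
      + (\<Sum>n\<le>K. stat_dist a n * (\<Sum>m\<le>K. Q a n m * rel_value g m))"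
    unfolding avg_reward_def steady_eq_stat_dist[OF adm] stationary_drift_zero[OF stat]
    by (simp add: right_diff_distrib sum_subtractf flip: sum_distrib_right)
  also have "\<dots> = (\<Sum>n\<le>K. stat_dist a n * (reward a n - g + (\<Sum>m\<le>K. Q a n m * rel_value g m)))"
    by (simp add: distrib_left sum.distrib)
  also have "\<dots> = (\<Sum>n\<le>K. stat_dist a n *
      ((\<Sum>j\<in>Js. a j n * gain (opt_diff g (Suc n)) j n) - (\<Sum>j\<in>Js. max 0 (gain (opt_diff g (Suc n)) j n))
       + (if n = 0 then mu * opt_diff g 0 else 0)))"
    by (intro sum.cong refl) (simp add: bellman_slack_eq)
  also have "\<dots> = (\<Sum>n\<le>K. stat_dist a n *
      ((\<Sum>j\<in>Js. a j n * gain (opt_diff g (Suc n)) j n) - (\<Sum>j\<in>Js. max 0 (gain (opt_diff g (Suc n)) j n))))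
    + stat_dist a 0 * (mu * opt_diff g 0)"
    by (simp add: distrib_left sum.distrib if_distrib[of "(*) _"] cong: if_cong)
  finally show ?thesis .
qed

lemma avg_reward_le:
  assumes adm: "adm a"
  shows "avg a - g \<le> stat_dist a 0 * (mu * opt_diff g 0)"
proof -
  have "a j n * gain (opt_diff g (Suc n)) j n \<le> max 0 (gain (opt_diff g (Suc n)) j n)"
    if "j \<in> Js" "n \<le> K" for j n
    using admD[OF adm that] by (intro mult_le_max_0) auto
  then have "stat_dist a n * ((\<Sum>j\<in>Js. a j n * gain (opt_diff g (Suc n)) j n)
      - (\<Sum>j\<in>Js. max 0 (gain (opt_diff g (Suc n)) j n))) \<le> 0" if "n \<le> K" for n
    using that stat_dist_nonneg[OF adm, of n]
    by (intro mult_nonneg_nonpos) (auto simp: sum_mono)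
  then show ?thesis
    unfolding avg_reward_decomp[OF adm] by (auto intro!: sum_nonpos)
qed

lemma avg_reward_threshold: "avg (threshold g) - g = stat_dist (threshold g) 0 * (mu * opt_diff g 0)"
  unfolding avg_reward_decomp[OF threshold_adm] threshold_mult_gain by simp

lemma avg_reward_bdd_above: "bdd_above (avg ` {a. adm a})"
proof (rule bdd_aboveI2)
  obtain c where c: "\<forall>a. adm a \<longrightarrow> c \<le> stat_dist a 0 \<and> stat_dist a 0 \<le> 1"
    using stat_dist_0_bounds by blast
  fix a assume "a \<in> {a. adm a}"
  then have adm: "adm a" by simp
  have "avg a - 0 \<le> stat_dist a 0 * (mu * opt_diff 0 0)" by (rule avg_reward_le[OF adm])
  also have "\<dots> \<le> max 0 (mu * opt_diff 0 0)"
    using c stat_dist_nonneg[OF adm] adm by (intro mult_le_max_0) auto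
  finally show "avg a \<le> max 0 (mu * opt_diff 0 0)" by simp
qed

lemma avg_reward_le_gstar: "adm a \<Longrightarrow> avg a \<le> g_opt"
  unfolding gstar_def by (rule cSUP_upper[OF _ avg_reward_bdd_above]) simp

text \<open>The optimal gain is the root of \<open>g \<mapsto> opt_diff g 0\<close>: the gain of the threshold policy
  overshoots \<open>g\<close> when \<open>opt_diff g 0 > 0\<close>, and every policy falls short of \<open>g\<close> by a
  uniform margin when \<open>opt_diff g 0 < 0\<close>.\<close>

lemma opt_diff_gstar_0: "opt_diff g_opt 0 = 0"
proof -
  obtain c where c_pos: "0 < c" and c: "\<forall>a. adm a \<longrightarrow> c \<le> stat_dist a 0 \<and> stat_dist a 0 \<le> 1"
    using stat_dist_0_bounds by blast
  have "\<not> 0 < opt_diff g_opt 0"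
  proof
    assume pos: "0 < opt_diff g_opt 0"
    have "0 < stat_dist (threshold g_opt) 0"
      using c c_pos threshold_adm[of g_opt] by fastforce
    then have "0 < stat_dist (threshold g_opt) 0 * (mu * opt_diff g_opt 0)"
      using pos mu_pos by simp
    then show False
      using avg_reward_threshold[of g_opt] avg_reward_le_gstar[OF threshold_adm[of g_opt]] by linarith
  qed
  moreover have "\<not> opt_diff g_opt 0 < 0"
  proof
    assume neg: "opt_diff g_opt 0 < 0"
    have "avg a \<le> g_opt + c * (mu * opt_diff g_opt 0)" if "a \<in> {a. adm a}" for a
    proof -
      have adm: "adm a" using that by simp
      have "avg a - g_opt \<le> stat_dist a 0 * (mu * opt_diff g_opt 0)" by (rule avg_reward_le[OF adm])
      also have "\<dots> \<le> c * (mu * opt_diff g_opt 0)"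
        using c adm mult_pos_neg[OF mu_pos neg] by (intro mult_right_mono_neg) auto
      finally show ?thesis by simp
    qed
    then have "g_opt \<le> g_opt + c * (mu * opt_diff g_opt 0)"
      unfolding gstar_def using threshold_adm by (intro cSUP_least) auto
    then show False using mult_pos_neg[OF c_pos mult_pos_neg[OF mu_pos neg]] by simp
  qed
  ultimately show ?thesis by simp
qed

lemma avg_reward_threshold_gstar: "avg (threshold g_opt) = g_opt"
  using avg_reward_threshold[of g_opt] opt_diff_gstar_0 by simp

lemma Vfun_eq_rel_value:
  assumes "Js \<noteq> {}" and n: "n \<le> K"
  shows "V g n = rel_value g n"
proof (cases "n = 0")
  case False
  define A where "A = {a. adm a \<and> 0 < (\<Sum>j\<in>Js. a j 0)}"
  define a' where "a' = (\<lambda>j m. if m = 0 then 1 else threshold g j m)"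
  have a': "a' \<in> A" "adm a'"
    unfolding A_def a'_def admissible_def threshold_def using assms finite_Js
    by (auto simp: card_gt_0_iff)
  have n1: "n \<in> {1..K}" using False n by simp
  have "cum_reward Js lam K mu eps eps0 estar nu eta g a n \<le> rel_value g n" if "a \<in> A" for a
    using that n cum_reward_eq_first_passage[OF _ n1] first_passage_le_rel_value[of a n g]
    unfolding A_def by simp
  moreover have "cum_reward Js lam K mu eps eps0 estar nu eta g a' n = rel_value g n"
    using cum_reward_eq_first_passage[OF a'(2) n1] first_passage_threshold[OF a'(2) _ n]
    unfolding a'_def by simp
  ultimately have "(SUP a \<in> A. cum_reward Js lam K mu eps eps0 estar nu eta g a n) = rel_value g n"
    using a'(1) by (intro antisym cSUP_least) (auto intro!: cSUP_upper2 bdd_aboveI2)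
  then show ?thesis unfolding Vfun_def A_def using False by simp
qed (simp add: Vfun_def)

end

theorem lemma1:
  fixes J :: "'j set" and S :: "'s set" and grp :: "'s \<Rightarrow> 'k"
    and Jsrv :: "'s \<Rightarrow> 'j set" and lam :: "'j \<Rightarrow> real"
    and mu eps eps0 :: "'k \<Rightarrow> real" and B :: "'k \<Rightarrow> nat" and estar :: real
    and s :: 's and nu :: "'j \<Rightarrow> real" and eta :: "'j \<Rightarrow> real"
  assumes finJ: "finite J"
    and lam_pos: "\<forall>j\<in>J. 0 < lam j"
    and Jsrv_sub: "\<forall>t\<in>S. Jsrv t \<subseteq> J"
    and mu_pos: "\<forall>t\<in>S. 0 < mu (grp t)"
    and B_ge: "\<forall>t\<in>S. 1 \<le> B (grp t)"
    and eps_ord: "\<forall>t\<in>S. eps0 (grp t) < eps (grp t) \<and> 0 \<le> eps0 (grp t)"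
    and sS: "s \<in> S"
  shows "\<exists>alpha. admissible (Jsrv s) (B (grp s)) alpha \<and>
     (\<forall>beta. admissible (Jsrv s) (B (grp s)) beta \<longrightarrow>
        avg_reward (Jsrv s) lam (B (grp s)) (mu (grp s)) (eps (grp s)) (eps0 (grp s)) estar nu eta beta
        \<le> avg_reward (Jsrv s) lam (B (grp s)) (mu (grp s)) (eps (grp s)) (eps0 (grp s)) estar nu eta alpha) \<and>
     (let g = gstar (Jsrv s) lam (B (grp s)) (mu (grp s)) (eps (grp s)) (eps0 (grp s)) estar nu eta;
          V = Vfun (Jsrv s) lam (B (grp s)) (mu (grp s)) (eps (grp s)) (eps0 (grp s)) estar nu eta g
      in \<forall>j\<in>Jsrv s. \<forall>n<B (grp s).
           (nu j / lam j < V (Suc n) - V n \<longrightarrow> alpha j n = 1) \<and>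
           (nu j / lam j = V (Suc n) - V n \<longrightarrow> alpha j n = 1 \<or> alpha j n = 0) \<and>
           (nu j / lam j > V (Suc n) - V n \<longrightarrow> alpha j n = 0))"
proof -
  interpret single_server "Jsrv s" lam "B (grp s)" "mu (grp s)" "eps (grp s)" "eps0 (grp s)" estar nu eta
    using finJ lam_pos Jsrv_sub mu_pos B_ge sS by unfold_locales (auto intro: finite_subset)
  have threshold_eq: "threshold g_opt j n = (if nu j / lam j < V g_opt (Suc n) - V g_opt n then 1 else 0)"
    if j: "j \<in> Jsrv s" and n: "n < B (grp s)" for j n
  proof -
    have "V g_opt (Suc n) - V g_opt n = opt_diff g_opt (Suc n)"
      using n Vfun_eq_rel_value[of "Suc n"] Vfun_eq_rel_value[of n] rel_value_Suc j by fastforce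
    then show ?thesis
      using n lam_pos[OF j] unfolding threshold_def gain_def by (simp add: pos_divide_less_eq mult.commute)
  qed
  show ?thesis
    using threshold_adm avg_reward_le_gstar avg_reward_threshold_gstar threshold_eq
    unfolding Let_def by (intro exI[of _ "threshold g_opt"]) auto
qed

end
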